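(* Let $\Gamma\subseteq\mathit{Aff}(2,\mathbb{H})$ be a subgroup acting freely on $\mathbb{H}^2$. Then $\Gamma$ is conjugate in $\mathit{Aff}(2,\mathbb{H})$ to a subgroup of $G_2$.
   Context: $\mathit{Aff}(2,\mathbb{H})$ is identified with invertible $3\times3$ quaternionic matrices $\begin{pmatrix} a&b&r\\ c&d&s\\ 0&0&1\end{pmatrix}$ acting on $(x,y)\in\mathbb{H}^2$ by $(x,y)\mapsto(ax+by+r,cx+dy+s)$. $G_2=\left\{\begin{pmatrix} 1&b&r\\ 0&d&s\\ 0&0&1\end{pmatrix}: b,r,s,d\in\mathbb{H}, d\neq0\right\}$. *)

theory Defs
  imports Complex_Main "HOL-Algebra.Group"
begin

datatype quat = Quat (qre: real) (qi: real) (qj: real) (qk: real)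

definition qzero :: quat where "qzero = Quat 0 0 0 0"
definition qone :: quat where "qone = Quat 1 0 0 0"

fun qadd :: "quat \<Rightarrow> quat \<Rightarrow> quat" where
  "qadd (Quat a1 b1 c1 d1) (Quat a2 b2 c2 d2) = Quat (a1 + a2) (b1 + b2) (c1 + c2) (d1 + d2)"

text \<open>Hamilton product: i^2 = j^2 = k^2 = ijk = -1.\<close>
fun qmul :: "quat \<Rightarrow> quat \<Rightarrow> quat" where
  "qmul (Quat a1 b1 c1 d1) (Quat a2 b2 c2 d2) =
     Quat (a1*a2 - b1*b2 - c1*c2 - d1*d2)
          (a1*b2 + b1*a2 + c1*d2 - d1*c2)
          (a1*c2 - b1*d2 + c1*a2 + d1*b2)
          (a1*d2 + b1*c2 - c1*b2 + d1*a2)"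

text \<open>AffM a b c d r s  represents the matrix ((a,b,r),(c,d,s),(0,0,1)).\<close>
datatype affm = AffM (ma: quat) (mb: quat) (mc: quat) (md: quat) (mr: quat) (ms: quat)

definition affmul :: "affm \<Rightarrow> affm \<Rightarrow> affm" where
  "affmul g h = AffM
     (qadd (qmul (ma g) (ma h)) (qmul (mb g) (mc h)))
     (qadd (qmul (ma g) (mb h)) (qmul (mb g) (md h)))
     (qadd (qmul (mc g) (ma h)) (qmul (md g) (mc h)))
     (qadd (qmul (mc g) (mb h)) (qmul (md g) (md h)))
     (qadd (qadd (qmul (ma g) (mr h)) (qmul (mb g) (ms h))) (mr g))
     (qadd (qadd (qmul (mc g) (mr h)) (qmul (md g) (ms h))) (ms g))"

definition affid :: affm where
  "affid = AffM qone qzero qzero qone qzero qzero"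

text \<open>Invertibility of the 3x3 matrix (an inverse of such a matrix automatically
  has last row (0,0,1)).\<close>
definition aff_invertible :: "affm \<Rightarrow> bool" where
  "aff_invertible g \<longleftrightarrow> (\<exists>h. affmul g h = affid \<and> affmul h g = affid)"

definition aff_act :: "affm \<Rightarrow> quat \<times> quat \<Rightarrow> quat \<times> quat" where
  "aff_act g p = (qadd (qadd (qmul (ma g) (fst p)) (qmul (mb g) (snd p))) (mr g),
                  qadd (qadd (qmul (mc g) (fst p)) (qmul (md g) (snd p))) (ms g))"

definition Aff2H :: "affm monoid" where
  "Aff2H = \<lparr>carrier = {g. aff_invertible g}, mult = affmul, one = affid\<rparr>"

definition G2 :: "affm set" where
  "G2 = {g. ma g = qone \<and> mc g = qzero \<and> md g \<noteq> qzero}"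

definition acts_freely :: "affm set \<Rightarrow> bool" where
  "acts_freely \<Gamma> \<longleftrightarrow> (\<forall>g\<in>\<Gamma>. \<forall>p. aff_act g p = p \<longrightarrow> g = affid)"

end

theory Submission
  imports Defs
begin

text \<open>
  The linear part of every element of \<open>\<Gamma>\<close> has a nonzero fixed vector: otherwise
  \<open>L - 1\<close> would be invertible and the affine map would have a fixed point.
  Two elements of \<open>\<Gamma>\<close> whose linear parts have second row \<open>(0, 1)\<close> have commuting
  linear parts, since their commutator \<open>(x, y) \<mapsto> (\<alpha> x + \<beta> y + r, y)\<close> has a
  fixed point unless \<open>\<alpha> = 1\<close> and \<open>\<beta> = 0\<close>.
  Now suppose the linear parts of \<open>a\<close> and \<open>g\<close> are nontrivial and fix \<open>e\<^sub>1\<close>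
  and \<open>e\<^sub>2\<close> respectively.
  A fixed vector of the linear part of \<open>a g\<close> yields a linear form invariant under
  both, so after a change of basis both have second row \<open>(0, 1)\<close> and commute, which
  forces one of the two linear parts to be the identity.
  By conjugation, a nonzero vector fixed by one nontrivial linear part is therefore
  fixed by all of them, and conjugating \<open>\<Gamma>\<close> by a linear map sending this common fixed
  vector to \<open>e\<^sub>1\<close> puts it into \<open>G\<^sub>2\<close>.
\<close>

lemma quat_eq_iff: "x = y \<longleftrightarrow> qre x = qre y \<and> qi x = qi y \<and> qj x = qj y \<and> qk x = qk y"
  by (cases x; cases y) auto

definition qnorm2 :: "quat \<Rightarrow> real" where
  "qnorm2 x = (qre x)\<^sup>2 + (qi x)\<^sup>2 + (qj x)\<^sup>2 + (qk x)\<^sup>2"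

lemma qnorm2_eq_0_iff: "qnorm2 x = 0 \<longleftrightarrow> x = qzero"
  by (cases x) (simp add: qnorm2_def qzero_def add_nonneg_eq_0_iff)

instantiation quat :: division_ring
begin

definition "0 = qzero"
definition "1 = qone"
definition "x + y = qadd x y"
definition "x * y = qmul x y"
definition "- x = Quat (- qre x) (- qi x) (- qj x) (- qk x)"
definition "x - y = x + - (y::quat)"
definition "inverse x =
  Quat (qre x / qnorm2 x) (- qi x / qnorm2 x) (- qj x / qnorm2 x) (- qk x / qnorm2 x)"
definition "divide x y = x * inverse (y::quat)"

lemma quat_components [simp]:
  "qre (x + y) = qre x + qre y" "qi (x + y) = qi x + qi y"
  "qj (x + y) = qj x + qj y" "qk (x + y) = qk x + qk y"
  "qre (x * y) = qre x * qre y - qi x * qi y - qj x * qj y - qk x * qk y"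
  "qi (x * y) = qre x * qi y + qi x * qre y + qj x * qk y - qk x * qj y"
  "qj (x * y) = qre x * qj y - qi x * qk y + qj x * qre y + qk x * qi y"
  "qk (x * y) = qre x * qk y + qi x * qj y - qj x * qi y + qk x * qre y"
  "qre 0 = 0" "qi 0 = 0" "qj 0 = 0" "qk 0 = 0"
  "qre 1 = 1" "qi 1 = 0" "qj 1 = 0" "qk 1 = 0"
  "qre (- x) = - qre x" "qi (- x) = - qi x" "qj (- x) = - qj x" "qk (- x) = - qk x"
  "qre (x - y) = qre x - qre y" "qi (x - y) = qi x - qi y"
  "qj (x - y) = qj x - qj y" "qk (x - y) = qk x - qk y"
  by (cases x; cases y; simp add: plus_quat_def times_quat_def zero_quat_def one_quat_def
      qzero_def qone_def uminus_quat_def minus_quat_def)+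

lemma quat_inverse_mult_self:
  assumes "x \<noteq> 0"
  shows "inverse x * x = (1::quat)" "x * inverse x = 1"
proof -
  have "qnorm2 x \<noteq> 0" using assms by (simp add: qnorm2_eq_0_iff zero_quat_def)
  then show "inverse x * x = 1" "x * inverse x = 1"
    by (simp_all add: quat_eq_iff inverse_quat_def field_simps)
      (simp_all add: qnorm2_def power2_eq_square)
qed

instance
proof
  fix x y z :: quat
  show "x + y + z = x + (y + z)" "x + y = y + x" "0 + x = x" "- x + x = 0" "x - y = x + - y"
    "x * y * z = x * (y * z)" "1 * x = x" "x * 1 = x" "(x + y) * z = x * z + y * z"
    "x * (y + z) = x * y + x * z" "0 \<noteq> (1::quat)"
    by (simp_all add: quat_eq_iff algebra_simps)
  show "x \<noteq> 0 \<Longrightarrow> inverse x * x = 1" "x \<noteq> 0 \<Longrightarrow> x * inverse x = 1"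
    by (simp_all add: quat_inverse_mult_self)
  show "divide x y = x * inverse y" by (simp add: divide_quat_def)
  show "inverse 0 = (0::quat)" by (simp add: quat_eq_iff inverse_quat_def)
qed

end

lemma quat_ops [simp]: "qadd x y = x + y" "qmul x y = x * y" "qzero = 0" "qone = 1"
  by (simp_all add: plus_quat_def times_quat_def zero_quat_def one_quat_def)

lemma affm_eq_iff:
  "g = h \<longleftrightarrow> ma g = ma h \<and> mb g = mb h \<and> mc g = mc h \<and> md g = md h \<and> mr g = mr h \<and> ms g = ms h"
  by (cases g; cases h) auto

lemma affmul_sel [simp]:
  "ma (affmul g h) = ma g * ma h + mb g * mc h"
  "mb (affmul g h) = ma g * mb h + mb g * md h"
  "mc (affmul g h) = mc g * ma h + md g * mc h"
  "md (affmul g h) = mc g * mb h + md g * md h"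
  "mr (affmul g h) = ma g * mr h + mb g * ms h + mr g"
  "ms (affmul g h) = mc g * mr h + md g * ms h + ms g"
  by (simp_all add: affmul_def)

lemma affid_sel [simp]:
  "ma affid = 1" "mb affid = 0" "mc affid = 0" "md affid = 1" "mr affid = 0" "ms affid = 0"
  by (simp_all add: affid_def)

lemma aff_act_eq:
  "aff_act g (x, y) = (ma g * x + mb g * y + mr g, mc g * x + md g * y + ms g)"
  by (simp add: aff_act_def)

lemma aff_act_affmul: "aff_act (affmul g h) p = aff_act g (aff_act h p)"
  by (cases p) (simp add: aff_act_eq algebra_simps)

lemma aff_act_affid [simp]: "aff_act affid p = p"
  by (cases p) (simp add: aff_act_eq)

lemma affmul_assoc: "affmul (affmul f g) h = affmul f (affmul g h)"
  by (simp add: affm_eq_iff algebra_simps)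

lemma affmul_affid [simp]: "affmul affid g = g" "affmul g affid = g"
  by (simp_all add: affm_eq_iff)

lemma affmul_cancel_left: "affmul k' k = affid \<Longrightarrow> affmul k' (affmul k g) = g"
  by (simp flip: affmul_assoc)

lemma Aff2H_simps [simp]:
  "mult Aff2H = affmul" "one Aff2H = affid" "carrier Aff2H = {g. aff_invertible g}"
  by (simp_all add: Aff2H_def)

lemma group_Aff2H: "group Aff2H"
proof (rule groupI)
  fix g h assume "g \<in> carrier Aff2H" "h \<in> carrier Aff2H"
  then obtain g' h' where "affmul g g' = affid" "affmul g' g = affid"
    "affmul h h' = affid" "affmul h' h = affid"
    by (auto simp: aff_invertible_def)
  then show "g \<otimes>\<^bsub>Aff2H\<^esub> h \<in> carrier Aff2H"
    unfolding Aff2H_simps aff_invertible_def mem_Collect_eq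
    by (intro exI[of _ "affmul h' g'"]) (metis affmul_assoc affmul_affid)
next
  fix g assume "g \<in> carrier Aff2H"
  then show "\<exists>h\<in>carrier Aff2H. h \<otimes>\<^bsub>Aff2H\<^esub> g = \<one>\<^bsub>Aff2H\<^esub>"
    by (auto simp: aff_invertible_def)
qed (auto simp: aff_invertible_def affmul_assoc)

lemma Aff2H_inv_eq:
  assumes "affmul k k' = affid" "affmul k' k = affid"
  shows "k \<in> carrier Aff2H" "inv\<^bsub>Aff2H\<^esub> k = k'"
proof -
  show k: "k \<in> carrier Aff2H" using assms by (auto simp: aff_invertible_def)
  have "k' \<in> carrier Aff2H" using assms by (auto simp: aff_invertible_def)
  then show "inv\<^bsub>Aff2H\<^esub> k = k'" using group.inv_equality[OF group_Aff2H _ k] assms by simp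
qed

lemma Aff2H_mult_inv:
  assumes "g \<in> carrier Aff2H"
  shows "affmul g (inv\<^bsub>Aff2H\<^esub> g) = affid" "affmul (inv\<^bsub>Aff2H\<^esub> g) g = affid"
  using group.r_inv[OF group_Aff2H assms] group.l_inv[OF group_Aff2H assms] by simp_all

definition lin_part :: "affm \<Rightarrow> quat \<times> quat \<Rightarrow> quat \<times> quat" where
  "lin_part g v = (ma g * fst v + mb g * snd v, mc g * fst v + md g * snd v)"

lemma lin_part_eq: "lin_part g (x, y) = (ma g * x + mb g * y, mc g * x + md g * y)"
  by (simp add: lin_part_def)

lemma lin_part_affmul: "lin_part (affmul g h) v = lin_part g (lin_part h v)"
  by (simp add: lin_part_def algebra_simps)

lemma lin_part_affid [simp]: "lin_part affid = id"
  by (simp add: lin_part_def fun_eq_iff)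

lemma lin_part_mult_right:
  "lin_part g (x * c, y * c) = (fst (lin_part g (x, y)) * c, snd (lin_part g (x, y)) * c)"
  by (simp add: lin_part_eq algebra_simps mult.assoc)

lemma lin_part_eq_id_iff: "lin_part g = id \<longleftrightarrow> ma g = 1 \<and> mb g = 0 \<and> mc g = 0 \<and> md g = 1"
proof
  assume "lin_part g = id"
  then have "lin_part g (1, 0) = (1, 0)" "lin_part g (0, 1) = (0, 1)" by simp_all
  then show "ma g = 1 \<and> mb g = 0 \<and> mc g = 0 \<and> md g = 1" by (simp add: lin_part_eq)
qed (simp add: lin_part_def fun_eq_iff)

lemma lin_part_fixes_e1_iff: "lin_part g (1, 0) = (1, 0) \<longleftrightarrow> ma g = 1 \<and> mc g = 0"
  by (simp add: lin_part_eq)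

lemma lin_part_fixes_e2_iff: "lin_part g (0, 1) = (0, 1) \<longleftrightarrow> mb g = 0 \<and> md g = 1"
  by (simp add: lin_part_eq)

lemma lin_part_cancel: "affmul k' k = affid \<Longrightarrow> lin_part k' (lin_part k v) = v"
  by (metis lin_part_affmul lin_part_affid id_apply)

lemma lin_part_conj:
  "affmul k' k = affid \<Longrightarrow>
    lin_part (affmul (affmul k g) k') (lin_part k v) = lin_part k (lin_part g v)"
  by (simp add: lin_part_affmul lin_part_cancel)

lemma lin_part_conj_fixes_iff:
  "affmul k' k = affid \<Longrightarrow>
    lin_part (affmul (affmul k g) k') (lin_part k v) = lin_part k v \<longleftrightarrow> lin_part g v = v"
  by (metis lin_part_conj lin_part_cancel)

lemma lin_part_conj_eq_id_iff:
  assumes "affmul k k' = affid" "affmul k' k = affid"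
  shows "lin_part (affmul (affmul k g) k') = id \<longleftrightarrow> lin_part g = id"
proof
  assume "lin_part (affmul (affmul k g) k') = id"
  then show "lin_part g = id"
    by (intro ext) (metis id_apply lin_part_conj_fixes_iff[OF assms(2)])
next
  assume "lin_part g = id"
  then show "lin_part (affmul (affmul k g) k') = id"
    by (intro ext) (simp add: lin_part_affmul lin_part_cancel[OF assms(1)])
qed

lemma invertible_mapping_to_e1:
  assumes "u \<noteq> (0, 0)"
  obtains k k' where "affmul k k' = affid" "affmul k' k = affid" "lin_part k u = (1, 0)"
proof -
  obtain u1 u2 where u: "u = (u1, u2)" by (cases u)
  show thesis
  proof (cases "u1 = 0")
    case False
    let ?k = "AffM (inverse u1) 0 (- (u2 * inverse u1)) 1 0 0"
    let ?k' = "AffM u1 0 u2 1 0 0"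
    have "affmul ?k ?k' = affid" "affmul ?k' ?k = affid" "lin_part ?k u = (1, 0)"
      using False by (simp_all add: u affm_eq_iff lin_part_eq mult.assoc)
    then show thesis by (rule that)
  next
    case True
    then have "u2 \<noteq> 0" using assms u by simp
    let ?k = "AffM 0 (inverse u2) 1 0 0 0"
    let ?k' = "AffM 0 1 u2 0 0 0"
    have "affmul ?k ?k' = affid" "affmul ?k' ?k = affid" "lin_part ?k u = (1, 0)"
      using True \<open>u2 \<noteq> 0\<close> by (simp_all add: u affm_eq_iff lin_part_eq)
    then show thesis by (rule that)
  qed
qed

lemma G2_memI:
  assumes "g \<in> carrier Aff2H" "lin_part g (1, 0) = (1, 0)"
  shows "g \<in> G2"
proof -
  obtain h where "affmul g h = affid" using assms(1) by (auto simp: aff_invertible_def)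
  then have "md (affmul g h) = 1" by simp
  with assms(2) have "md g * md h = 1" by (simp add: lin_part_fixes_e1_iff)
  then have "md g \<noteq> 0" by auto
  then show ?thesis using assms(2) by (simp add: G2_def lin_part_fixes_e1_iff)
qed

lemma linear_system_2x2_pivot:
  fixes p q r s t1 t2 :: "'a::division_ring"
  assumes "p \<noteq> 0"
  shows "(\<exists>x y. p * x + q * y = t1 \<and> r * x + s * y = t2) \<or>
    (\<exists>x y. (x, y) \<noteq> (0, 0) \<and> p * x + q * y = 0 \<and> r * x + s * y = 0)"
proof (cases "s - r * inverse p * q = 0")
  case True
  define x where "x = - (inverse p * q)"
  have "p * x + q * 1 = 0"
    using assms by (simp add: x_def mult.assoc[symmetric])
  moreover have "r * x + s * 1 = 0"
    using True by (simp add: x_def algebra_simps mult.assoc)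
  ultimately show ?thesis by (metis one_neq_zero prod.inject)
next
  case False
  define \<delta> where "\<delta> = s - r * inverse p * q"
  define y where "y = inverse \<delta> * (t2 - r * inverse p * t1)"
  define x where "x = inverse p * (t1 - q * y)"
  have "p * x + q * y = t1" using assms by (simp add: x_def mult.assoc[symmetric])
  moreover have "r * x + s * y = r * inverse p * t1 + \<delta> * y"
    by (simp add: x_def \<delta>_def algebra_simps mult.assoc)
  moreover have "\<delta> * y = t2 - r * inverse p * t1"
    using False by (simp add: y_def \<delta>_def mult.assoc[symmetric])
  ultimately show ?thesis by auto
qed

lemma linear_system_2x2_solvable_or_singular:
  fixes p q r s t1 t2 :: "'a::division_ring"
  shows "(\<exists>x y. p * x + q * y = t1 \<and> r * x + s * y = t2) \<or>
    (\<exists>x y. (x, y) \<noteq> (0, 0) \<and> p * x + q * y = 0 \<and> r * x + s * y = 0)"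
proof -
  consider "p \<noteq> 0" | "r \<noteq> 0" | "p = 0" "r = 0" by blast
  then show ?thesis
  proof cases
    case 1
    then show ?thesis by (rule linear_system_2x2_pivot)
  next
    case 2
    then show ?thesis using linear_system_2x2_pivot[of r s t2 p q t1] by blast
  next
    case 3
    then have "(1, 0) \<noteq> (0::'a, 0::'a)" "p * 1 + q * 0 = 0" "r * 1 + s * 0 = 0" by simp_all
    then show ?thesis by blast
  qed
qed

lemma unit_second_row_inverse:
  assumes "affmul g g' = affid" "mc g = 0" "md g = 1"
  shows "mc g' = 0" "md g' = 1" "ms g' = - ms g"
  using arg_cong[OF assms(1), of mc] arg_cong[OF assms(1), of md] arg_cong[OF assms(1), of ms]
  by (simp_all add: assms(2,3) eq_neg_iff_add_eq_0)

text \<open>The equations say that \<open>(x, y)\<close> is fixed by the product of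
  \<open>[[1, b], [0, d]]\<close> and \<open>[[a', 0], [c', 1]]\<close>.\<close>

lemma fixed_vector_of_product_unipotent:
  fixes a' b c' x y :: "'a::division_ring"
  assumes "(x, y) \<noteq> (0, 0)" "b \<noteq> 0"
    and "(a' + b * c') * x + b * y = x" "c' * x + y = y"
  shows "c' = 0"
proof (rule ccontr)
  assume "c' \<noteq> 0"
  with assms(4) have "x = 0" by simp
  with assms(2,3) have "y = 0" by simp
  with \<open>x = 0\<close> assms(1) show False by simp
qed

lemma fixed_vector_of_product:
  fixes a' b c' d x y :: "'a::division_ring"
  assumes "(x, y) \<noteq> (0, 0)" "d \<noteq> 1"
    and e1: "(a' + b * c') * x + b * y = x" and e2: "d * c' * x + d * y = y"
  shows "a' = 1 + b * inverse (d - 1) * c'"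
proof -
  define q where "q = b * inverse (d - 1)"
  have d1: "d - 1 \<noteq> 0" using assms(2) by simp
  have qd1: "q * (d - 1) = b" using d1 by (simp add: q_def mult.assoc)
  then have qd: "q * d = b + q" by (simp add: algebra_simps diff_eq_eq)
  have e2': "(d - 1) * y = - (d * c' * x)"
    using e2 by (simp add: algebra_simps eq_neg_iff_add_eq_0)
  have "x \<noteq> 0"
  proof
    assume "x = 0"
    with e2' d1 have "y = 0" by simp
    with \<open>x = 0\<close> assms(1) show False by simp
  qed
  have "b * y = q * ((d - 1) * y)"
    by (simp add: qd1 flip: mult.assoc)
  also have "\<dots> = - ((b + q) * c' * x)"
    by (simp add: e2' mult.assoc flip: qd)
  finally have b_y: "b * y = - (b * c' * x) - q * c' * x" by (simp add: algebra_simps)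
  have "(a' - 1 - q * c') * x = (a' + b * c') * x + b * y - x"
    by (simp add: b_y algebra_simps)
  also have "\<dots> = 0" using e1 by simp
  finally have "a' - 1 = q * c'" using \<open>x \<noteq> 0\<close> by simp
  then show ?thesis by (simp add: q_def algebra_simps)
qed

locale free_affine_group =
  fixes \<Gamma> :: "affm set"
  assumes is_subgroup: "subgroup \<Gamma> Aff2H" and is_free: "acts_freely \<Gamma>"
begin

lemma mem_carrier: "g \<in> \<Gamma> \<Longrightarrow> g \<in> carrier Aff2H"
  by (rule subgroup.mem_carrier[OF is_subgroup])

lemma affmul_closed: "g \<in> \<Gamma> \<Longrightarrow> h \<in> \<Gamma> \<Longrightarrow> affmul g h \<in> \<Gamma>"
  using subgroup.m_closed[OF is_subgroup] by simp

lemma inv_closed: "g \<in> \<Gamma> \<Longrightarrow> inv\<^bsub>Aff2H\<^esub> g \<in> \<Gamma>"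
  by (rule subgroup.m_inv_closed[OF is_subgroup])

lemma eq_affid_if_fixed_point: "g \<in> \<Gamma> \<Longrightarrow> aff_act g p = p \<Longrightarrow> g = affid"
  using is_free unfolding acts_freely_def by blast

lemma conj_free_affine_group:
  assumes kk': "affmul k k' = affid" and k'k: "affmul k' k = affid"
  shows "free_affine_group ((\<lambda>g. affmul (affmul k g) k') ` \<Gamma>)"
proof (rule free_affine_group.intro)
  interpret Aff2H: group Aff2H by (rule group_Aff2H)
  have k: "k \<in> carrier Aff2H" and k': "k' \<in> carrier Aff2H"
    using kk' k'k by (auto simp: aff_invertible_def)
  have "(\<lambda>g. affmul (affmul k g) k') \<in> hom Aff2H Aff2H"
  proof (rule homI)
    fix g assume "g \<in> carrier Aff2H"
    then show "affmul (affmul k g) k' \<in> carrier Aff2H"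
      using k k' Aff2H.m_closed by (metis Aff2H_simps(1))
  next
    fix g h
    show "affmul (affmul k (g \<otimes>\<^bsub>Aff2H\<^esub> h)) k' =
        affmul (affmul k g) k' \<otimes>\<^bsub>Aff2H\<^esub> affmul (affmul k h) k'"
      by (simp add: affmul_assoc affmul_cancel_left[OF k'k])
  qed
  then have "group_hom Aff2H Aff2H (\<lambda>g. affmul (affmul k g) k')"
    by (simp add: group_hom_def group_hom_axioms_def group_Aff2H)
  then show "subgroup ((\<lambda>g. affmul (affmul k g) k') ` \<Gamma>) Aff2H"
    using is_subgroup by (rule group_hom.subgroup_img_is_subgroup)
  show "acts_freely ((\<lambda>g. affmul (affmul k g) k') ` \<Gamma>)"
    unfolding acts_freely_def
  proof (intro ballI allI impI)
    fix c p assume "c \<in> (\<lambda>g. affmul (affmul k g) k') ` \<Gamma>" and fixed: "aff_act c p = p"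
    then obtain g where g: "g \<in> \<Gamma>" and c: "c = affmul (affmul k g) k'" by blast
    have cancel: "aff_act k' (aff_act k q) = q" for q
      using aff_act_affmul[of k' k q] by (simp add: k'k)
    have "aff_act k (aff_act g (aff_act k' p)) = p"
      using fixed by (simp add: c aff_act_affmul)
    then have "aff_act g (aff_act k' p) = aff_act k' p" using cancel by metis
    then have "g = affid" using g eq_affid_if_fixed_point by blast
    then show "c = affid" by (simp add: c kk')
  qed
qed

lemma lin_part_fixed_vector:
  assumes "g \<in> \<Gamma>"
  shows "\<exists>v. v \<noteq> (0, 0) \<and> lin_part g v = v"
proof -
  consider (fixed_point) x y
      where "(ma g - 1) * x + mb g * y = - mr g" "mc g * x + (md g - 1) * y = - ms g"
    | (kernel) x y
      where "(x, y) \<noteq> (0, 0)" "(ma g - 1) * x + mb g * y = 0" "mc g * x + (md g - 1) * y = 0"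
    using linear_system_2x2_solvable_or_singular
      [of "ma g - 1" "mb g" "- mr g" "mc g" "md g - 1" "- ms g"] by blast
  then show ?thesis
  proof cases
    case fixed_point
    then have "aff_act g (x, y) = (x, y)"
      by (simp add: aff_act_eq algebra_simps)
    then have "g = affid" using assms eq_affid_if_fixed_point by blast
    then show ?thesis by (intro exI[of _ "(1, 0)"]) simp
  next
    case kernel
    then have "lin_part g (x, y) = (x, y)" by (simp add: lin_part_eq algebra_simps)
    then show ?thesis using kernel(1) by blast
  qed
qed

lemma lin_part_eq_id_if_unit_second_row:
  assumes c: "c \<in> \<Gamma>" and "mc c = 0" "md c = 1" "ms c = 0"
  shows "lin_part c = id"
proof -
  have act: "aff_act c (x, y) = (ma c * x + mb c * y + mr c, y)" for x y
    using assms by (simp add: aff_act_eq)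
  have "ma c = 1"
  proof (rule ccontr)
    assume "ma c \<noteq> 1"
    define x where "x = - (inverse (ma c - 1) * mr c)"
    have "(ma c - 1) * x + 0 = - mr c"
      using \<open>ma c \<noteq> 1\<close> by (simp add: x_def mult.assoc[symmetric])
    then have "aff_act c (x, 0) = (x, 0)" by (simp add: act algebra_simps)
    then have "c = affid" using c eq_affid_if_fixed_point by blast
    with \<open>ma c \<noteq> 1\<close> show False by simp
  qed
  moreover have "mb c = 0"
  proof (rule ccontr)
    assume "mb c \<noteq> 0"
    then have "aff_act c (0, - (inverse (mb c) * mr c)) = (0, - (inverse (mb c) * mr c))"
      by (simp add: act \<open>ma c = 1\<close> mult.assoc[symmetric])
    then have "c = affid" using c eq_affid_if_fixed_point by blast
    with \<open>mb c \<noteq> 0\<close> show False by simp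
  qed
  ultimately show ?thesis using assms by (simp add: lin_part_eq_id_iff)
qed

lemma lin_part_commute_if_unit_second_row:
  assumes g: "g \<in> \<Gamma>" and h: "h \<in> \<Gamma>" and "mc g = 0" "md g = 1" "mc h = 0" "md h = 1"
  shows "lin_part g (lin_part h v) = lin_part h (lin_part g v)"
proof -
  define g' where "g' = inv\<^bsub>Aff2H\<^esub> g"
  define h' where "h' = inv\<^bsub>Aff2H\<^esub> h"
  have gg': "affmul g g' = affid" "affmul g' g = affid"
    using Aff2H_mult_inv[OF mem_carrier[OF g]] by (simp_all add: g'_def)
  have hh': "affmul h h' = affid" "affmul h' h = affid"
    using Aff2H_mult_inv[OF mem_carrier[OF h]] by (simp_all add: h'_def)
  have g': "mc g' = 0" "md g' = 1" "ms g' = - ms g"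
    using unit_second_row_inverse[OF gg'(1)] assms by simp_all
  have h': "mc h' = 0" "md h' = 1" "ms h' = - ms h"
    using unit_second_row_inverse[OF hh'(1)] assms by simp_all
  define c where "c = affmul (affmul (affmul g h) g') h'"
  have "c \<in> \<Gamma>"
    using g h by (simp add: c_def g'_def h'_def affmul_closed inv_closed)
  moreover have "mc c = 0" "md c = 1" "ms c = 0"
    using assms g' h' by (simp_all add: c_def)
  ultimately have "lin_part c = id" by (rule lin_part_eq_id_if_unit_second_row)
  have "affmul g h = affmul c (affmul h g)"
    by (simp add: c_def affmul_assoc affmul_cancel_left hh'(2) gg'(2))
  then show ?thesis
    by (metis lin_part_affmul \<open>lin_part c = id\<close> id_apply)
qed

lemma lin_part_commute_if_conj_unit_second_row:
  assumes a: "a \<in> \<Gamma>" and g: "g \<in> \<Gamma>"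
    and kk': "affmul k k' = affid" and k'k: "affmul k' k = affid"
    and "mc (affmul (affmul k a) k') = 0" "md (affmul (affmul k a) k') = 1"
    and "mc (affmul (affmul k g) k') = 0" "md (affmul (affmul k g) k') = 1"
  shows "lin_part a (lin_part g v) = lin_part g (lin_part a v)"
proof -
  interpret conj: free_affine_group "(\<lambda>g. affmul (affmul k g) k') ` \<Gamma>"
    using kk' k'k by (rule conj_free_affine_group)
  have "lin_part k (lin_part a (lin_part g v)) = lin_part k (lin_part g (lin_part a v))"
    using conj.lin_part_commute_if_unit_second_row
        [of "affmul (affmul k a) k'" "affmul (affmul k g) k'" "lin_part k v"] a g assms(5-)
    by (simp add: lin_part_conj[OF k'k])
  then show ?thesis by (metis lin_part_cancel[OF k'k])
qed

lemma lin_part_eq_id_if_fixes_e2: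
  assumes a: "a \<in> \<Gamma>" and a_e1: "lin_part a (1, 0) = (1, 0)"
    and a_nontrivial: "lin_part a \<noteq> id"
    and g: "g \<in> \<Gamma>" and g_e2: "lin_part g (0, 1) = (0, 1)"
  shows "lin_part g = id"
proof (rule ccontr)
  assume g_nontrivial: "lin_part g \<noteq> id"
  have A: "ma a = 1" "mc a = 0" and G: "mb g = 0" "md g = 1"
    using a_e1 g_e2 by (simp_all add: lin_part_fixes_e1_iff lin_part_fixes_e2_iff)
  have A': "mb a \<noteq> 0 \<or> md a \<noteq> 1" using a_nontrivial A by (auto simp: lin_part_eq_id_iff)
  have G': "ma g \<noteq> 1 \<or> mc g \<noteq> 0" using g_nontrivial G by (auto simp: lin_part_eq_id_iff)
  obtain x y where xy: "(x, y) \<noteq> (0, 0)" "lin_part (affmul a g) (x, y) = (x, y)"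
    using lin_part_fixed_vector[OF affmul_closed[OF a g]] by auto
  then have e1: "(ma g + mb a * mc g) * x + mb a * y = x"
    and e2: "md a * mc g * x + md a * y = y"
    using A G by (simp_all add: lin_part_eq algebra_simps)
  show False
  proof (cases "md a = 1")
    case True
    then have "mc g = 0"
      using fixed_vector_of_product_unipotent[OF xy(1), of "mb a" "ma g" "mc g"] A' e1 e2 by simp
    then have "lin_part a (lin_part g (0, 1)) = lin_part g (lin_part a (0, 1))"
      using lin_part_commute_if_unit_second_row[OF a g] A G True by simp
    then have "(ma g - 1) * mb a = 0" using A G by (simp add: lin_part_eq algebra_simps)
    then show False using A' G' True \<open>mc g = 0\<close> by simp
  next
    case False
    define q where "q = mb a * inverse (md a - 1)"
    have "q * (md a - 1) = mb a" using False by (simp add: q_def mult.assoc)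
    then have qd: "q * md a = mb a + q" by (simp add: algebra_simps diff_eq_eq)
    have "ma g = 1 + q * mc g"
      using fixed_vector_of_product[OF xy(1) False e1 e2] by (simp add: q_def)
    with G' have "mc g \<noteq> 0" by auto
    txt \<open>Both linear parts leave the form \<open>(x, y) \<mapsto> x - q y\<close> invariant, and
      \<open>k\<close> turns it into the second coordinate.\<close>
    define k where "k = AffM 0 1 1 (- q) 0 0"
    define k' where "k' = AffM q 1 1 0 0 0"
    have kk': "affmul k k' = affid" and k'k: "affmul k' k = affid"
      by (simp_all add: k_def k'_def affm_eq_iff)
    have "lin_part a (lin_part g (1, 0)) = lin_part g (lin_part a (1, 0))"
      using \<open>ma g = 1 + q * mc g\<close> A G qd
      by (intro lin_part_commute_if_conj_unit_second_row[OF a g kk' k'k])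
        (simp_all add: k_def k'_def algebra_simps mult.assoc)
    then have "(md a - 1) * mc g = 0" using A G by (simp add: lin_part_eq algebra_simps)
    then show False using False \<open>mc g \<noteq> 0\<close> by simp
  qed
qed

lemma lin_part_fixes_e1_if_nontrivial_fixes_e1:
  assumes a: "a \<in> \<Gamma>" "lin_part a (1, 0) = (1, 0)" "lin_part a \<noteq> id" and g: "g \<in> \<Gamma>"
  shows "lin_part g (1, 0) = (1, 0)"
proof -
  obtain v1 v2 where v: "(v1, v2) \<noteq> (0, 0)" "lin_part g (v1, v2) = (v1, v2)"
    using lin_part_fixed_vector[OF g] by auto
  show ?thesis
  proof (cases "v2 = 0")
    case True
    then have "v1 \<noteq> 0" "(ma g - 1) * v1 = 0" "mc g * v1 = 0"
      using v by (simp_all add: lin_part_eq algebra_simps)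
    then show ?thesis by (simp add: lin_part_fixes_e1_iff)
  next
    case False
    define p where "p = v1 * inverse v2"
    have "lin_part g (p, 1) = (p, 1)"
      using lin_part_mult_right[of g v1 "inverse v2" v2] v(2) False by (simp add: p_def)
    define t where "t = AffM 1 (- p) 0 1 0 0"
    define t' where "t' = AffM 1 p 0 1 0 0"
    have tt': "affmul t t' = affid" and t't: "affmul t' t = affid"
      by (simp_all add: t_def t'_def affm_eq_iff)
    have t_e1: "lin_part t (1, 0) = (1, 0)" and t_p: "lin_part t (p, 1) = (0, 1)"
      by (simp_all add: t_def lin_part_eq)
    interpret conj: free_affine_group "(\<lambda>g. affmul (affmul t g) t') ` \<Gamma>"
      using tt' t't by (rule conj_free_affine_group)
    have "lin_part (affmul (affmul t g) t') = id"
    proof (rule conj.lin_part_eq_id_if_fixes_e2[of "affmul (affmul t a) t'"])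
      show "lin_part (affmul (affmul t a) t') (1, 0) = (1, 0)"
        using lin_part_conj_fixes_iff[OF t't, of a "(1, 0)"] a(2) by (simp add: t_e1)
      show "lin_part (affmul (affmul t g) t') (0, 1) = (0, 1)"
        using lin_part_conj_fixes_iff[OF t't, of g "(p, 1)"] \<open>lin_part g (p, 1) = (p, 1)\<close>
        by (simp add: t_p)
    qed (use a g lin_part_conj_eq_id_iff[OF tt' t't] in auto)
    then show ?thesis using lin_part_conj_eq_id_iff[OF tt' t't] by simp
  qed
qed

lemma lin_part_fixes_if_nontrivial_fixes:
  assumes a: "a \<in> \<Gamma>" "u \<noteq> (0, 0)" "lin_part a u = u" "lin_part a \<noteq> id" and g: "g \<in> \<Gamma>"
  shows "lin_part g u = u"
proof -
  obtain k k' where kk': "affmul k k' = affid" and k'k: "affmul k' k = affid"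
    and ku: "lin_part k u = (1, 0)"
    using invertible_mapping_to_e1[OF a(2)] by blast
  interpret conj: free_affine_group "(\<lambda>g. affmul (affmul k g) k') ` \<Gamma>"
    using kk' k'k by (rule conj_free_affine_group)
  have "lin_part (affmul (affmul k g) k') (1, 0) = (1, 0)"
  proof (rule conj.lin_part_fixes_e1_if_nontrivial_fixes_e1[of "affmul (affmul k a) k'"])
    show "lin_part (affmul (affmul k a) k') (1, 0) = (1, 0)"
      using lin_part_conj_fixes_iff[OF k'k, of a u] a(3) by (simp add: ku)
  qed (use a g lin_part_conj_eq_id_iff[OF kk' k'k] in auto)
  then show ?thesis using lin_part_conj_fixes_iff[OF k'k, of g u] by (simp add: ku)
qed

lemma common_fixed_vector:
  obtains u where "u \<noteq> (0, 0)" "\<forall>g\<in>\<Gamma>. lin_part g u = u"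
proof (cases "\<forall>g\<in>\<Gamma>. lin_part g = id")
  case True
  then show thesis by (intro that[of "(1, 0)"]) simp_all
next
  case False
  then obtain a where a: "a \<in> \<Gamma>" "lin_part a \<noteq> id" by blast
  obtain u where "u \<noteq> (0, 0)" "lin_part a u = u" using lin_part_fixed_vector[OF a(1)] by blast
  then show thesis using that a lin_part_fixes_if_nontrivial_fixes by blast
qed

end

theorem mainTheorem10:
  assumes "subgroup \<Gamma> Aff2H"
    and "acts_freely \<Gamma>"
  shows "\<exists>h\<in>carrier Aff2H. (\<lambda>g. h \<otimes>\<^bsub>Aff2H\<^esub> g \<otimes>\<^bsub>Aff2H\<^esub> inv\<^bsub>Aff2H\<^esub> h) ` \<Gamma> \<subseteq> G2"
proof -
  interpret free_affine_group \<Gamma> using assms by (rule free_affine_group.intro)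
  obtain u where u: "u \<noteq> (0, 0)" "\<forall>g\<in>\<Gamma>. lin_part g u = u" by (rule common_fixed_vector)
  obtain k k' where kk': "affmul k k' = affid" and k'k: "affmul k' k = affid"
    and ku: "lin_part k u = (1, 0)"
    using invertible_mapping_to_e1[OF u(1)] by blast
  interpret conj: free_affine_group "(\<lambda>g. affmul (affmul k g) k') ` \<Gamma>"
    using kk' k'k by (rule conj_free_affine_group)
  have "affmul (affmul k g) k' \<in> G2" if "g \<in> \<Gamma>" for g
  proof (rule G2_memI)
    show "affmul (affmul k g) k' \<in> carrier Aff2H"
      using that by (intro conj.mem_carrier imageI)
    show "lin_part (affmul (affmul k g) k') (1, 0) = (1, 0)"
      using lin_part_conj_fixes_iff[OF k'k, of g u] u(2) that by (simp add: ku)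
  qed
  then show ?thesis using Aff2H_inv_eq[OF kk' k'k] by auto
qed

end
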